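(* Let $f\colon\underline I=I_1\times\cdots\times I_n\to\mathbb R$ be a continuous convex function ($I_i$ intervals), let $H$ be a finite-dimensional Hilbert space, let $T$ be a locally compact Hausdorff space with a Radon measure $\nu$, and let $t\mapsto a_t\in B(H)$ be a unital column field on $T$. Let $t\mapsto\underline x_t=(x_{1t},\dots,x_{nt})$ be a bounded continuous field on $T$ of abelian $n$-tuples of self-adjoint operators on $H$ with $\sigma(x_{it})\subseteq I_i$ for all $i,t$. Put $y_i=\int_T a_t^*x_{it}a_t\,d\nu(t)$, $\underline y=(y_1,\dots,y_n)$, and assume that $\underline y$ is an abelian $n$-tuple. Then $$f(\underline y)\prec_w\int_T a_t^*f(\underline x_t)a_t\,d\nu(t).$$
   Context: A unital column field is a continuous field $t\mapsto a_t$ of operators on $H$ with $\int_T a_t^*a_t\,d\nu(t)=1$. An $n$-tuple is abelian if its entries commute; $f$ of an abelian tuple of self-adjoint operators is defined by joint functional calculus. For a self-adjoint operator $x$ on an $m$-dimensional Hilbert space, $x_{[1]}\ge\cdots\ge x_{[m]}$ denote its eigenvalues counted with multiplicity in decreasing order. For self-adjoint $x,y$ on $H$, $x\prec_w y$ (weak majorization) means $\sum_{i=1}^k x_{[i]}\le\sum_{i=1}^k y_{[i]}$ for $k=1,\dots,m$. *)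

theory Defs
  imports "HOL-Analysis.Analysis" "HOL-Library.Multiset"
begin

text \<open>Operators on the finite-dimensional Hilbert space H = complex^'m are complex
  matrices of type complex^'m^'m.\<close>

definition adj :: "complex^'m^'m \<Rightarrow> complex^'m^'m" where
  "adj A = (\<chi> i j. cnj (A $ j $ i))"

definition self_adjoint :: "complex^'m^'m \<Rightarrow> bool" where
  "self_adjoint A \<longleftrightarrow> adj A = A"

definition unitary_mat :: "complex^'m^'m \<Rightarrow> bool" where
  "unitary_mat U \<longleftrightarrow> adj U ** U = mat 1 \<and> U ** adj U = mat 1"

definition diag_mat :: "('m \<Rightarrow> real) \<Rightarrow> complex^'m^'m" where
  "diag_mat d = (\<chi> i j. if i = j then complex_of_real (d i) else 0)"

definition spec :: "complex^'m^'m \<Rightarrow> complex set" where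
  "spec A = {c. \<exists>v. v \<noteq> 0 \<and> A *v v = c *s v}"

definition abelian_sa_tuple :: "('n \<Rightarrow> complex^'m^'m) \<Rightarrow> bool" where
  "abelian_sa_tuple x \<longleftrightarrow> (\<forall>i. self_adjoint (x i)) \<and> (\<forall>i j. x i ** x j = x j ** x i)"

definition joint_fc :: "(real^'n \<Rightarrow> real) \<Rightarrow> ('n \<Rightarrow> complex^'m^'m) \<Rightarrow> complex^'m^'m" where
  "joint_fc f x = (SOME R. \<exists>U D. unitary_mat U \<and> (\<forall>i. x i = U ** diag_mat (D i) ** adj U)
      \<and> R = U ** diag_mat (\<lambda>j. f (\<chi> i. D i j)) ** adj U)"

text \<open>Eigenvalues of a self-adjoint operator counted with multiplicity,
  in decreasing order (x_[1] >= ... >= x_[m]); list index 0 is x_[1].\<close>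
definition eigvals_desc :: "complex^'m^'m \<Rightarrow> real list" where
  "eigvals_desc x = rev (sorted_list_of_multiset
     (SOME M. \<exists>U d. unitary_mat U \<and> x = U ** diag_mat d ** adj U
                  \<and> M = image_mset d (mset_set (UNIV :: 'm set))))"

definition weak_major :: "complex^'m^'m \<Rightarrow> complex^'m^'m \<Rightarrow> bool" where
  "weak_major x y \<longleftrightarrow> (\<forall>k\<in>{1..CARD('m)}.
      sum_list (take k (eigvals_desc x)) \<le> sum_list (take k (eigvals_desc y)))"

definition radon_measure :: "'t::topological_space measure \<Rightarrow> bool" where
  "radon_measure M \<longleftrightarrow> sets M = sets borel
     \<and> (\<forall>K. compact K \<longrightarrow> emeasure M K < \<infinity>)
     \<and> (\<forall>A\<in>sets borel. emeasure M A = (INF U\<in>{U. open U \<and> A \<subseteq> U}. emeasure M U))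
     \<and> (\<forall>U. open U \<longrightarrow> emeasure M U = (SUP K\<in>{K. compact K \<and> K \<subseteq> U}. emeasure M K))"

definition unital_column_field :: "'t::topological_space measure \<Rightarrow> ('t \<Rightarrow> complex^'m^'m) \<Rightarrow> bool" where
  "unital_column_field M a \<longleftrightarrow> continuous_on UNIV a
     \<and> integrable M (\<lambda>t. adj (a t) ** a t)
     \<and> integral\<^sup>L M (\<lambda>t. adj (a t) ** a t) = mat 1"

end

(*
  Diagonalize the abelian tuple y = (y_i) by one unitary U with columns u_j, so that
  y_i u_j = D_i(j) u_j and f(y) u_j = f(D(j)) u_j.  For a unit vector u, the state
  A |-> <A u, u> of the field t |-> a_t^* x_t a_t is, for every t, a finite mixture of
  point masses at joint eigenvalues of x_t (the weights are the squared coordinates of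
  a_t u in a joint eigenbasis), and the masses integrate to <(int a_t^* a_t) u, u> = 1.
  Jensen's inequality for such mixtures gives f(D(j)) <= <R u_j, u_j> with
  R = int a_t^* f(x_t) a_t.  By Ky Fan's maximum principle the sum of the k largest
  eigenvalues of f(y) is a sum of k of the values f(D(j)), and the sum of the corresponding
  diagonal entries <R u_j, u_j> is at most the sum of the k largest eigenvalues of R.
*)

theory Submission
  imports Defs
begin

definition cinner :: "complex^'m \<Rightarrow> complex^'m \<Rightarrow> complex" where
  "cinner u v = (\<Sum>i\<in>UNIV. u $ i * cnj (v $ i))"

lemma cinner_zero_left [simp]: "cinner 0 w = 0"
  by (simp add: cinner_def)

lemma cinner_add_left: "cinner (u + v) w = cinner u w + cinner v w"
  by (simp add: cinner_def distrib_right sum.distrib)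

lemma cinner_diff_left: "cinner (u - v) w = cinner u w - cinner v w"
  by (simp add: cinner_def left_diff_distrib sum_subtractf)

lemma cinner_scaleR_left: "cinner (c *\<^sub>R u) w = complex_of_real c * cinner u w"
  unfolding cinner_def vector_scaleR_component by (simp add: scaleR_conv_of_real sum_distrib_left mult.assoc)

lemma cinner_scaleR_right: "cinner u (c *\<^sub>R w) = complex_of_real c * cinner u w"
  unfolding cinner_def vector_scaleR_component by (simp add: scaleR_conv_of_real sum_distrib_left mult_ac)

lemma cinner_smult_left: "cinner (c *s u) w = c * cinner u w"
  by (simp add: cinner_def sum_distrib_left mult.assoc)

lemma cinner_sum_left: "finite A \<Longrightarrow> cinner (\<Sum>b\<in>A. f b) w = (\<Sum>b\<in>A. cinner (f b) w)"
  unfolding cinner_def by (simp add: sum_distrib_right) (rule sum.swap)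

lemma cnj_cinner: "cnj (cinner u v) = cinner v u"
  by (simp add: cinner_def mult.commute)

lemma mult_cnj_self: "z * cnj z = complex_of_real ((cmod z)\<^sup>2)"
  by (rule complex_norm_square[symmetric])

lemma cinner_self_sum: "cinner v v = complex_of_real (\<Sum>l\<in>UNIV. (cmod (v $ l))\<^sup>2)"
  by (simp add: cinner_def mult_cnj_self del: of_real_power)

lemma Re_cinner_self: "Re (cinner v v) = (\<Sum>l\<in>UNIV. (cmod (v $ l))\<^sup>2)"
  by (simp add: cinner_self_sum)

lemma cinner_self: "cinner v v = complex_of_real ((norm v)\<^sup>2)"
  by (simp add: cinner_self_sum norm_vec_def L2_set_def sum_nonneg del: of_real_power)

lemma inner_eq_Re_cinner: "inner u v = Re (cinner u v)"
  by (simp add: inner_vec_def cinner_def inner_complex_def Re_sum)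

lemma adj_component [simp]: "adj A $ i $ j = cnj (A $ j $ i)"
  by (simp add: adj_def)

lemma adj_adj [simp]: "adj (adj A) = A"
  by (simp add: vec_eq_iff)

lemma adj_matrix_mult: "adj (A ** B) = adj B ** adj A"
  by (simp add: vec_eq_iff matrix_matrix_mult_def mult.commute)

lemma adj_diag_mat [simp]: "adj (diag_mat d) = diag_mat d"
  by (simp add: vec_eq_iff diag_mat_def)

lemma bounded_linear_adj: "bounded_linear (adj :: complex^'m^'m \<Rightarrow> complex^'m^'m)"
  by (simp add: linear_conv_bounded_linear[symmetric] linearI vec_eq_iff)

lemma cinner_adj_left: "cinner (A *v u) v = cinner u (adj A *v v)"
proof -
  have "cinner (A *v u) v = (\<Sum>i\<in>UNIV. \<Sum>j\<in>UNIV. A$i$j * u$j * cnj (v$i))"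
    by (simp add: cinner_def matrix_vector_mult_def sum_distrib_right)
  also have "\<dots> = (\<Sum>j\<in>UNIV. \<Sum>i\<in>UNIV. A$i$j * u$j * cnj (v$i))"
    by (rule sum.swap)
  also have "\<dots> = cinner u (adj A *v v)"
    by (simp add: cinner_def matrix_vector_mult_def sum_distrib_left mult_ac)
  finally show ?thesis .
qed

lemma cinner_adj_right: "cinner u (A *v v) = cinner (adj A *v u) v"
  using cinner_adj_left[of "adj A" u v] by simp

lemma cinner_congruence:
  "cinner ((adj A ** X ** A) *v u) u = cinner (X *v (A *v u)) (A *v u)"
  by (simp add: matrix_vector_mul_assoc[symmetric] matrix_mul_assoc[symmetric] cinner_adj_left)

lemma matrix_vector_mult_scaleR_complex:
  fixes A :: "complex^'n^'m"
  shows "A *v (c *\<^sub>R v) = c *\<^sub>R (A *v v)"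
  unfolding vec_eq_iff matrix_vector_mult_def vector_scaleR_component
  by (simp add: scaleR_conv_of_real sum_distrib_left mult_ac)

lemma of_real_smult: "complex_of_real r *s v = r *\<^sub>R v"
  unfolding vec_eq_iff vector_scaleR_component by (simp add: scaleR_conv_of_real)

lemma matrix_vector_mult_axis: "A *v axis j 1 = column j (A :: complex^'m^'m)"
  by (simp add: matrix_vector_mult_def column_def axis_def vec_eq_iff
      if_distrib if_distribR cong: if_cong)

lemma diag_mat_vector_mult: "diag_mat d *v v = (\<chi> i. complex_of_real (d i) * v $ i)"
  by (simp add: diag_mat_def matrix_vector_mult_def vec_eq_iff if_distrib if_distribR cong: if_cong)

lemma cinner_conj_diag_mat:
  "cinner ((V ** diag_mat d ** adj V) *v w) w = complex_of_real (\<Sum>l\<in>UNIV. d l * (cmod ((adj V *v w) $ l))\<^sup>2)"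
proof -
  have "cinner ((V ** diag_mat d ** adj V) *v w) w = cinner (diag_mat d *v (adj V *v w)) (adj V *v w)"
    by (simp add: cinner_adj_left matrix_vector_mul_assoc[symmetric])
  also have "\<dots> = complex_of_real (\<Sum>l\<in>UNIV. d l * (cmod ((adj V *v w) $ l))\<^sup>2)"
    by (simp add: cinner_def diag_mat_vector_mult mult.assoc mult_cnj_self del: of_real_power)
  finally show ?thesis .
qed

lemma self_adjoint_conj_diag_mat: "self_adjoint (V ** diag_mat d ** adj V)"
  by (simp add: self_adjoint_def adj_matrix_mult matrix_mul_assoc)

lemma unitary_mat_mult: "unitary_mat U \<Longrightarrow> unitary_mat V \<Longrightarrow> unitary_mat (U ** V)"
  unfolding unitary_mat_def adj_matrix_mult
  by (metis matrix_mul_assoc matrix_mul_lid matrix_mul_rid)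

lemma unitary_mat_adj: "unitary_mat U \<Longrightarrow> unitary_mat (adj U)"
  by (simp add: unitary_mat_def)

lemma cinner_unitary_columns:
  assumes "unitary_mat U"
  shows "cinner (column j U) (column i U) = (if i = j then 1 else 0)"
proof -
  have "cinner (column j U) (column i U) = (adj U ** U) $ i $ j"
    by (simp add: matrix_matrix_mult_def cinner_def column_def mult.commute)
  then show ?thesis
    using assms by (simp add: unitary_mat_def mat_def)
qed

lemma unitary_row_norms:
  assumes "unitary_mat U"
  shows "(\<Sum>j\<in>UNIV. (cmod (U $ l $ j))\<^sup>2) = 1"
proof -
  have "(\<Sum>j\<in>UNIV. complex_of_real ((cmod (U $ l $ j))\<^sup>2)) = (U ** adj U) $ l $ l"
    by (simp add: matrix_matrix_mult_def mult_cnj_self del: of_real_power)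
  also have "\<dots> = 1"
    using assms by (simp add: unitary_mat_def mat_def)
  finally show ?thesis
    by (metis of_real_eq_1_iff of_real_sum)
qed

lemma unitary_column_norms:
  assumes "unitary_mat U"
  shows "(\<Sum>l\<in>UNIV. (cmod (U $ l $ j))\<^sup>2) = 1"
  using unitary_row_norms[OF unitary_mat_adj[OF assms], of j] by (simp add: complex_mod_cnj)

lemma unitary_matI: "adj U ** U = mat 1 \<Longrightarrow> unitary_mat U"
  unfolding unitary_mat_def using matrix_left_right_inverse by blast

lemma adj_unitary_column:
  assumes "unitary_mat U"
  shows "adj U *v column j U = axis j 1"
  using assms by (simp add: matrix_vector_mult_axis[symmetric] matrix_vector_mul_assoc unitary_mat_def)

lemma unitary_conj_diag_column:
  assumes "unitary_mat U"
  shows "(U ** diag_mat d ** adj U) *v column l U = d l *\<^sub>R column l U"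
proof -
  have "diag_mat d *v axis l 1 = d l *\<^sub>R axis l 1"
    unfolding diag_mat_vector_mult vec_eq_iff axis_def vector_scaleR_component
    by (simp add: scaleR_conv_of_real)
  then have "(U ** diag_mat d ** adj U) *v column l U = U *v (d l *\<^sub>R axis l 1)"
    by (simp add: matrix_vector_mul_assoc[symmetric] adj_unitary_column[OF assms])
  then show ?thesis
    by (simp add: matrix_vector_mult_scaleR_complex matrix_vector_mult_axis)
qed

lemma cinner_unitary_conj_diag_column:
  assumes "unitary_mat V"
  shows "cinner ((V ** diag_mat d ** adj V) *v column j V) (column j V) = complex_of_real (d j)"
  using cinner_unitary_columns[OF assms, of j j]
  by (simp add: unitary_conj_diag_column[OF assms] cinner_scaleR_left)

lemma cinner_adj_unitary:
  assumes "unitary_mat W"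
  shows "cinner (adj W *v w) (adj W *v w) = cinner w w"
  using assms by (simp add: cinner_adj_right matrix_vector_mul_assoc unitary_mat_def)

lemma of_real_in_spec_conj_diag:
  assumes "unitary_mat W"
  shows "complex_of_real (d l) \<in> spec (W ** diag_mat d ** adj W)"
proof -
  have "column l W \<noteq> 0"
    using cinner_unitary_columns[OF assms, of l l] by (auto simp: cinner_def)
  then show ?thesis
    unfolding spec_def using unitary_conj_diag_column[OF assms] by (auto simp: of_real_smult)
qed

section \<open>Simultaneous diagonalization of commuting self-adjoint matrices\<close>

lemma quadratic_nonpos_imp_linear_coeff_zero:
  fixes a b :: real
  assumes "\<And>e. a * e + b * e\<^sup>2 \<le> 0"
  shows "a = 0"
proof (rule ccontr)
  assume a: "a \<noteq> 0"
  define k where "k = \<bar>b\<bar> + 1"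
  have pos: "k > 0" "k + b > 0"
    unfolding k_def by auto
  have "a * (a / k) + b * (a / k)\<^sup>2 = a\<^sup>2 * (k + b) / k\<^sup>2"
    using pos by (simp add: field_simps power2_eq_square)
  moreover have "a\<^sup>2 * (k + b) / k\<^sup>2 > 0"
    using a pos by simp
  ultimately show False
    using assms[of "a / k"] by linarith
qed

lemma quadratic_form_max_on_subspace:
  fixes A :: "complex^'m^'m"
  assumes T: "subspace T" and v0: "v0 \<in> T" "v0 \<noteq> 0"
  shows "\<exists>v\<in>T. norm v = 1 \<and> (\<forall>w\<in>T. inner (A *v w) w \<le> inner (A *v v) v * (norm w)\<^sup>2)"
proof -
  define q where "q w = inner (A *v w) w" for w
  define S where "S = T \<inter> sphere 0 1"
  have "compact S"
    unfolding S_def by (subst Int_commute) (intro compact_Int_closed compact_sphere closed_subspace[OF T])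
  moreover have "(1 / norm v0) *\<^sub>R v0 \<in> S"
    using v0 T by (auto simp: S_def subspace_scale)
  moreover have "continuous_on S q"
    unfolding q_def
    by (intro continuous_intros linear_continuous_on bounded_linearI' matrix_vector_right_distrib
        matrix_vector_mult_scaleR_complex)
  ultimately obtain v where v: "v \<in> S" and vmax: "\<And>w. w \<in> S \<Longrightarrow> q w \<le> q v"
    using continuous_attains_sup[of S q] by blast
  have "q w \<le> q v * (norm w)\<^sup>2" if w: "w \<in> T" for w
  proof (cases "w = 0")
    case False
    have "(1 / norm w) *\<^sub>R w \<in> S"
      using w False T by (auto simp: S_def subspace_scale)
    moreover have "q ((1 / norm w) *\<^sub>R w) = (1 / norm w)\<^sup>2 * q w"
      by (simp add: q_def matrix_vector_mult_scaleR_complex power2_eq_square)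
    ultimately have "(1 / norm w)\<^sup>2 * q w \<le> q v"
      using vmax by metis
    then show ?thesis
      using False by (simp add: field_simps power2_eq_square)
  qed (simp add: q_def)
  then show ?thesis
    using v by (auto simp: S_def q_def)
qed

text \<open>A maximiser \<open>v\<close> of \<open>\<langle>A w, w\<rangle>\<close> on the unit sphere of \<open>T\<close> is an eigenvector: the first-order
  condition makes \<open>A v - \<langle>A v, v\<rangle> v\<close> orthogonal to \<open>T\<close>, and it lies in \<open>T\<close>.\<close>

lemma self_adjoint_eigenvector_in_invariant_subspace:
  fixes A :: "complex^'m^'m"
  assumes sa: "adj A = A" and T: "subspace T" and v0: "v0 \<in> T" "v0 \<noteq> 0"
    and inv: "\<And>v. v \<in> T \<Longrightarrow> A *v v \<in> T"
  shows "\<exists>v\<in>T. v \<noteq> 0 \<and> (\<exists>l::real. A *v v = l *\<^sub>R v)"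
proof -
  obtain v where vT: "v \<in> T" and nv: "norm v = 1"
    and vmax: "\<And>w. w \<in> T \<Longrightarrow> inner (A *v w) w \<le> inner (A *v v) v * (norm w)\<^sup>2"
    using quadratic_form_max_on_subspace[OF T v0] by blast
  define l where "l = inner (A *v v) v"
  have sym: "inner (A *v w) v = inner (A *v v) w" for w
  proof -
    have "inner (A *v w) v = Re (cinner w (A *v v))"
      using sa by (simp add: inner_eq_Re_cinner cinner_adj_left)
    also have "\<dots> = Re (cnj (cinner (A *v v) w))"
      by (simp only: cnj_cinner)
    also have "\<dots> = inner (A *v v) w"
      by (simp add: inner_eq_Re_cinner)
    finally show ?thesis .
  qed
  have vv: "inner v v = 1"
    using nv by (simp add: dot_square_norm)
  have orth: "inner (A *v v - l *\<^sub>R v) w = 0" if w: "w \<in> T" for w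
  proof -
    have "2 * inner (A *v v - l *\<^sub>R v) w * e + (inner (A *v w) w - l * (norm w)\<^sup>2) * e\<^sup>2 \<le> 0" for e
    proof -
      have "v + e *\<^sub>R w \<in> T"
        using T vT w by (simp add: subspace_add subspace_scale)
      then have le: "inner (A *v (v + e *\<^sub>R w)) (v + e *\<^sub>R w) \<le> l * (norm (v + e *\<^sub>R w))\<^sup>2"
        unfolding l_def by (rule vmax)
      have "inner (A *v (v + e *\<^sub>R w)) (v + e *\<^sub>R w) = l + 2 * e * inner (A *v v) w + e\<^sup>2 * inner (A *v w) w"
        using sym[of w]
        by (simp add: l_def matrix_vector_right_distrib matrix_vector_mult_scaleR_complex
            inner_add_left inner_add_right power2_eq_square inner_commute algebra_simps)
      moreover have "(norm (v + e *\<^sub>R w))\<^sup>2 = 1 + 2 * e * inner v w + e\<^sup>2 * (norm w)\<^sup>2"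
        unfolding power2_norm_eq_inner using vv
        by (simp add: inner_add_left inner_add_right inner_commute power2_eq_square algebra_simps)
      ultimately show ?thesis
        using le by (simp add: inner_diff_left algebra_simps power2_eq_square)
    qed
    then have "2 * inner (A *v v - l *\<^sub>R v) w = 0"
      by (rule quadratic_nonpos_imp_linear_coeff_zero)
    then show ?thesis
      by simp
  qed
  have "A *v v - l *\<^sub>R v \<in> T"
    using T vT inv by (simp add: subspace_diff subspace_scale)
  then have "inner (A *v v - l *\<^sub>R v) (A *v v - l *\<^sub>R v) = 0"
    by (rule orth)
  then have "A *v v = l *\<^sub>R v"
    by simp
  then show ?thesis
    using vT nv by (intro bexI[of _ v]) auto
qed

definition joint_eigenvector :: "('k \<Rightarrow> complex^'m^'m) \<Rightarrow> complex^'m \<Rightarrow> bool" where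
  "joint_eigenvector X v \<longleftrightarrow> (\<forall>i. \<exists>l::real. X i *v v = l *\<^sub>R v)"

definition orthonormal :: "(complex^'m) set \<Rightarrow> bool" where
  "orthonormal B \<longleftrightarrow> (\<forall>b\<in>B. \<forall>c\<in>B. cinner b c = (if b = c then 1 else 0))"

text \<open>An invariant subspace of least dimension is an eigenspace of every \<open>X i\<close>: the eigenspace
  of \<open>X i\<close> inside it is again invariant, by commutativity.\<close>

lemma common_eigenvector_in_invariant_subspace:
  fixes X :: "'k \<Rightarrow> complex^'m^'m"
  assumes sa: "\<And>i. adj (X i) = X i" and comm: "\<And>i j. X i ** X j = X j ** X i"
    and T: "subspace T" and v0: "v0 \<in> T" "v0 \<noteq> 0"
    and inv: "\<And>i v. v \<in> T \<Longrightarrow> X i *v v \<in> T"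
  shows "\<exists>v\<in>T. v \<noteq> 0 \<and> joint_eigenvector X v"
proof -
  define P where "P T' \<longleftrightarrow> subspace T' \<and> T' \<subseteq> T \<and> (\<exists>v\<in>T'. v \<noteq> 0) \<and> (\<forall>i. \<forall>v\<in>T'. X i *v v \<in> T')"
    for T'
  have "P T"
    unfolding P_def using T v0 inv by blast
  then obtain T0 where PT0: "P T0" and minT0: "\<And>T'. P T' \<Longrightarrow> dim T0 \<le> dim T'"
    using ex_has_least_nat[of P T dim] by blast
  have T0: "subspace T0" "T0 \<subseteq> T" "\<exists>v\<in>T0. v \<noteq> 0" "\<And>i v. v \<in> T0 \<Longrightarrow> X i *v v \<in> T0"
    using PT0 unfolding P_def by blast+
  have "\<exists>l::real. \<forall>w\<in>T0. X i *v w = l *\<^sub>R w" for i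
  proof -
    obtain v1 where "v1 \<in> T0" "v1 \<noteq> 0"
      using T0(3) by blast
    then obtain v l where v: "v \<in> T0" "v \<noteq> 0" and vl: "X i *v v = l *\<^sub>R v"
      using self_adjoint_eigenvector_in_invariant_subspace[OF sa T0(1)] T0(4) by blast
    define E where "E = {w \<in> T0. X i *v w = l *\<^sub>R w}"
    have sE: "subspace E"
      using T0(1) unfolding subspace_def E_def
      by (simp add: matrix_vector_right_distrib matrix_vector_mult_scaleR_complex scaleR_add_right)
    have "X j *v w \<in> E" if "w \<in> E" for j w
    proof -
      have "X i *v (X j *v w) = X j *v (X i *v w)"
        by (simp add: matrix_vector_mul_assoc comm)
      also have "\<dots> = l *\<^sub>R (X j *v w)"
        using that by (simp add: E_def matrix_vector_mult_scaleR_complex)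
      finally show ?thesis
        using that T0(4) unfolding E_def by blast
    qed
    moreover have "v \<in> E" "E \<subseteq> T"
      using v vl T0(2) by (auto simp: E_def)
    ultimately have "P E"
      unfolding P_def using sE v(2) by blast
    then have "dim T0 \<le> dim E"
      by (rule minT0)
    moreover have "E \<subseteq> T0"
      by (auto simp: E_def)
    ultimately have "E = T0"
      using subspace_dim_equal[OF sE T0(1)] by blast
    then show ?thesis
      unfolding E_def by blast
  qed
  then show ?thesis
    using T0(2,3) unfolding joint_eigenvector_def by blast
qed

lemma smult_as_scaleR: "(c::complex) *s (b::complex^'m) = Re c *\<^sub>R b + Im c *\<^sub>R (\<i> *s b)"
proof -
  have "c * z = Re c *\<^sub>R z + Im c *\<^sub>R (\<i> * z)" for z
    by (subst complex_eq[of c]) (simp add: scaleR_conv_of_real algebra_simps)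
  then show ?thesis
    unfolding vec_eq_iff by simp
qed

text \<open>Otherwise every vector is its Fourier expansion along \<open>B\<close>, so the real span of
  \<open>B \<union> \<i>B\<close> would be the whole space of real dimension \<open>2 CARD('m)\<close>.\<close>

lemma orthogonal_complement_nonzero:
  assumes B: "finite B" "orthonormal B" and card: "card B < CARD('m)"
  shows "\<exists>v::complex^'m. v \<noteq> 0 \<and> (\<forall>b\<in>B. cinner v b = 0)"
proof (rule ccontr)
  assume "\<not> ?thesis"
  then have compl0: "v = 0" if "\<forall>b\<in>B. cinner v b = 0" for v :: "complex^'m"
    using that by blast
  have expansion: "v = (\<Sum>b\<in>B. cinner v b *s b)" for v
  proof -
    have "cinner (\<Sum>b\<in>B. cinner v b *s b) c = cinner v c" if c: "c \<in> B" for c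
    proof -
      have "cinner (\<Sum>b\<in>B. cinner v b *s b) c = (\<Sum>b\<in>B. cinner v b * cinner b c)"
        by (simp add: cinner_sum_left[OF B(1)] cinner_smult_left)
      also have "\<dots> = (\<Sum>b\<in>B. if b = c then cinner v b else 0)"
        using B(2) c unfolding orthonormal_def by (intro sum.cong) auto
      finally show ?thesis
        using c B(1) by simp
    qed
    then have "v - (\<Sum>b\<in>B. cinner v b *s b) = 0"
      by (intro compl0) (simp add: cinner_diff_left)
    then show ?thesis
      by simp
  qed
  define W where "W = B \<union> (\<lambda>b. \<i> *s b) ` B"
  have "UNIV \<subseteq> span W"
  proof
    fix v :: "complex^'m"
    have "cinner v b *s b \<in> span W" if "b \<in> B" for b
    proof -
      have "b \<in> span W" "\<i> *s b \<in> span W"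
        using that by (auto simp: W_def intro: span_base)
      then show ?thesis
        by (subst smult_as_scaleR) (intro span_add span_scale)
    qed
    then have "(\<Sum>b\<in>B. cinner v b *s b) \<in> span W"
      by (rule span_sum)
    then show "v \<in> span W"
      by (simp only: expansion[of v, symmetric])
  qed
  then have "dim (UNIV :: (complex^'m) set) \<le> card W"
    by (rule dim_le_card) (simp add: W_def B(1))
  also have "card W \<le> card B + card ((\<lambda>b. \<i> *s b) ` B)"
    unfolding W_def by (rule card_Un_le)
  also have "\<dots> \<le> 2 * card B"
    using card_image_le[OF B(1)] by simp
  finally show False
    using card by simp
qed

lemma orthonormal_insert:
  assumes "orthonormal B" "cinner v v = 1" "\<forall>b\<in>B. cinner v b = 0"
  shows "orthonormal (insert v B)"
proof -
  have "\<forall>b\<in>B. cinner b v = 0"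
    using assms(3) by (metis cnj_cinner complex_cnj_zero)
  then show ?thesis
    using assms unfolding orthonormal_def by auto
qed

lemma joint_eigenvector_orthogonal_to:
  fixes X :: "'k \<Rightarrow> complex^'m^'m"
  assumes sa: "\<And>i. adj (X i) = X i" and comm: "\<And>i j. X i ** X j = X j ** X i"
    and B: "finite B" "orthonormal B" "\<forall>b\<in>B. joint_eigenvector X b" and card: "card B < CARD('m)"
  shows "\<exists>v. cinner v v = 1 \<and> (\<forall>b\<in>B. cinner v b = 0) \<and> joint_eigenvector X v"
proof -
  define T where "T = {v. \<forall>b\<in>B. cinner v b = 0}"
  have sT: "subspace T"
    unfolding subspace_def T_def by (simp add: cinner_add_left cinner_scaleR_left)
  have inv: "X i *v v \<in> T" if "v \<in> T" for i v
  proof -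
    have "cinner (X i *v v) b = 0" if b: "b \<in> B" for b
    proof -
      obtain l where l: "X i *v b = l *\<^sub>R b"
        using B(3) b unfolding joint_eigenvector_def by blast
      have "cinner (X i *v v) b = cinner v (X i *v b)"
        by (simp add: cinner_adj_left sa)
      also have "\<dots> = 0"
        using \<open>v \<in> T\<close> b unfolding l T_def by (simp add: cinner_scaleR_right)
      finally show ?thesis .
    qed
    then show ?thesis
      by (simp add: T_def)
  qed
  obtain v0 where v0: "v0 \<in> T" "v0 \<noteq> 0"
    using orthogonal_complement_nonzero[OF B(1,2) card] by (auto simp: T_def)
  obtain v where v: "v \<in> T" "v \<noteq> 0" and ev: "joint_eigenvector X v"
    using common_eigenvector_in_invariant_subspace[of X, OF sa comm sT v0 inv] by blast
  define u where "u = (1 / norm v) *\<^sub>R v"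
  have "cinner u u = 1"
    unfolding u_def using v by (simp add: cinner_scaleR_left cinner_scaleR_right cinner_self
        power2_eq_square)
  moreover have "\<forall>b\<in>B. cinner u b = 0"
    using v unfolding u_def T_def by (simp add: cinner_scaleR_left)
  moreover have "X i *v u = l *\<^sub>R u" if "X i *v v = l *\<^sub>R v" for i l
    using that by (simp add: u_def matrix_vector_mult_scaleR_complex)
  then have "joint_eigenvector X u"
    using ev unfolding joint_eigenvector_def by blast
  ultimately show ?thesis
    by blast
qed

lemma orthonormal_joint_eigenvectors:
  fixes X :: "'k \<Rightarrow> complex^'m^'m"
  assumes sa: "\<And>i. adj (X i) = X i" and comm: "\<And>i j. X i ** X j = X j ** X i"
  shows "k \<le> CARD('m) \<Longrightarrow> \<exists>B. finite B \<and> card B = k \<and> orthonormal B \<and> (\<forall>b\<in>B. joint_eigenvector X b)"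
proof (induction k)
  case 0
  show ?case
    by (intro exI[of _ "{}"]) (simp add: orthonormal_def)
next
  case (Suc k)
  then obtain B where B: "finite B" "card B = k" "orthonormal B" "\<forall>b\<in>B. joint_eigenvector X b"
    by auto
  moreover have "card B < CARD('m)"
    using Suc.prems B(2) by simp
  ultimately obtain v where v: "cinner v v = 1" "\<forall>b\<in>B. cinner v b = 0" "joint_eigenvector X v"
    using joint_eigenvector_orthogonal_to[of X, OF sa comm] by blast
  have "v \<notin> B"
    using v(1,2) by force
  then show ?case
    using B v orthonormal_insert[OF B(3) v(1,2)] by (intro exI[of _ "insert v B"]) auto
qed

theorem simultaneous_diagonalization:
  fixes X :: "'k \<Rightarrow> complex^'m^'m"
  assumes sa: "\<And>i. adj (X i) = X i" and comm: "\<And>i j. X i ** X j = X j ** X i"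
  shows "\<exists>U D. unitary_mat U \<and> (\<forall>i. X i = U ** diag_mat (D i) ** adj U)"
proof -
  obtain B where B: "finite B" "card B = CARD('m)" "orthonormal B" "\<forall>b\<in>B. joint_eigenvector X b"
    using orthonormal_joint_eigenvectors[of X, OF sa comm order.refl] by blast
  then obtain s where s: "bij_betw s (UNIV :: 'm set) B"
    by (metis finite_same_card_bij finite_class.finite_UNIV)
  define U :: "complex^'m^'m" where "U = (\<chi> r j. s j $ r)"
  have "(adj U ** U) $ i $ j = cinner (s j) (s i)" for i j
    unfolding matrix_matrix_mult_def cinner_def U_def by (simp add: mult.commute)
  moreover have "cinner (s j) (s i) = (if i = j then 1 else 0)" for i j
    using B(3) s unfolding orthonormal_def bij_betw_def inj_on_def by auto
  ultimately have U: "unitary_mat U"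
    by (intro unitary_matI) (simp add: vec_eq_iff mat_def)
  define D where "D i j = (SOME l::real. X i *v s j = l *\<^sub>R s j)" for i j
  have D: "X i *v s j = D i j *\<^sub>R s j" for i j
    unfolding D_def
    by (rule someI_ex) (use B(4) s in \<open>auto simp: joint_eigenvector_def bij_betw_def\<close>)
  have "X i ** U = U ** diag_mat (D i)" for i
  proof -
    have "(X i ** U) $ r $ j = (U ** diag_mat (D i)) $ r $ j" for r j
    proof -
      have "(X i ** U) $ r $ j = (X i *v s j) $ r"
        unfolding matrix_matrix_mult_def matrix_vector_mult_def U_def by simp
      also have "\<dots> = complex_of_real (D i j) * U $ r $ j"
        unfolding D vector_scaleR_component by (simp add: U_def scaleR_conv_of_real)
      also have "\<dots> = (U ** diag_mat (D i)) $ r $ j"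
        unfolding matrix_matrix_mult_def diag_mat_def
        by (simp add: if_distrib if_distribR mult.commute cong: if_cong)
      finally show ?thesis .
    qed
    then show ?thesis
      by (simp add: vec_eq_iff)
  qed
  then have "X i = U ** diag_mat (D i) ** adj U" for i
    using U unfolding unitary_mat_def by (metis matrix_mul_assoc matrix_mul_rid)
  then show ?thesis
    using U by blast
qed

lemma joint_fc_diagonalization:
  assumes "abelian_sa_tuple x"
  shows "\<exists>U D. unitary_mat U \<and> (\<forall>i. x i = U ** diag_mat (D i) ** adj U)
           \<and> joint_fc f x = U ** diag_mat (\<lambda>j. f (\<chi> i. D i j)) ** adj U"
proof -
  obtain U D where "unitary_mat U" "\<forall>i. x i = U ** diag_mat (D i) ** adj U"
    using simultaneous_diagonalization[of x] assms
    unfolding abelian_sa_tuple_def self_adjoint_def by blast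
  then have "\<exists>R U D. unitary_mat U \<and> (\<forall>i. x i = U ** diag_mat (D i) ** adj U)
      \<and> R = U ** diag_mat (\<lambda>j. f (\<chi> i. D i j)) ** adj U"
    by blast
  then show ?thesis
    unfolding joint_fc_def by (rule someI_ex)
qed

section \<open>Ky Fan's maximum principle\<close>

definition largest_sum :: "nat \<Rightarrow> ('m::finite \<Rightarrow> real) \<Rightarrow> real" where
  "largest_sum k d = sum_list (take k (rev (sorted_list_of_multiset (image_mset d (mset_set UNIV)))))"

lemma largest_sum_attained:
  fixes d :: "'m::finite \<Rightarrow> real"
  assumes k: "k \<le> CARD('m)"
  obtains L where "card L = k" "largest_sum k d = sum d L" "\<And>l l'. l \<in> L \<Longrightarrow> l' \<notin> L \<Longrightarrow> d l' \<le> d l"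
proof -
  obtain zs where zs: "set zs = (UNIV :: 'm set)" "distinct zs"
    using finite_distinct_list[of "UNIV :: 'm set"] by auto
  define rs where "rs = rev (sort_key d zs)"
  have rs: "distinct rs" "set rs = UNIV" "length rs = CARD('m)"
    using zs unfolding rs_def by (simp_all add: distinct_card[symmetric])
  have sorted: "sorted_wrt (\<lambda>a b. d b \<le> d a) rs"
    unfolding rs_def sorted_wrt_rev by (simp add: sorted_wrt_map[symmetric])
  have "sorted_list_of_multiset (image_mset d (mset_set (UNIV :: 'm set))) = sort (map d zs)"
    using zs by (metis mset_map mset_set_set sorted_list_of_multiset_mset)
  also have "\<dots> = map d (sort_key d zs)"
    by (rule properties_for_sort) simp_all
  finally have "largest_sum k d = sum_list (map d (take k rs))"
    unfolding largest_sum_def rs_def by (simp add: take_map rev_map)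
  also have "\<dots> = sum d (set (take k rs))"
    using rs(1) by (simp add: sum_list_distinct_conv_sum_set)
  finally have "largest_sum k d = sum d (set (take k rs))" .
  moreover have "card (set (take k rs)) = k"
    using rs k by (simp add: distinct_card)
  moreover have "d l' \<le> d l" if "l \<in> set (take k rs)" "l' \<notin> set (take k rs)" for l l'
  proof -
    have "l' \<in> set (drop k rs)"
      using that(2) rs(2) by (metis UNIV_I Un_iff append_take_drop_id set_append)
    then show ?thesis
      using that(1) sorted unfolding sorted_wrt_append[of _ "take k rs" "drop k rs", simplified]
      by blast
  qed
  ultimately show ?thesis
    using that by blast
qed

lemma weighted_sum_le_largest_values:
  fixes d w :: "'m::finite \<Rightarrow> real"
  assumes w: "\<And>l. 0 \<le> w l" "\<And>l. w l \<le> 1" and total: "(\<Sum>l\<in>UNIV. w l) = real (card L)"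
    and top: "\<And>l l'. l \<in> L \<Longrightarrow> l' \<notin> L \<Longrightarrow> d l' \<le> d l"
  shows "(\<Sum>l\<in>UNIV. d l * w l) \<le> sum d L"
proof (cases "L = {}")
  case True
  then have "\<forall>l\<in>UNIV. w l = 0"
    using total w(1) by (simp add: sum_nonneg_eq_0_iff)
  then show ?thesis
    using True by simp
next
  case False
  define th where "th = Min (d ` L)"
  have thL: "th \<le> d l" if "l \<in> L" for l
    unfolding th_def using that by simp
  have thN: "d l \<le> th" if "l \<notin> L" for l
  proof -
    have "th \<in> d ` L"
      unfolding th_def using False by (intro Min_in) auto
    then obtain m where "m \<in> L" "th = d m"
      by blast
    then show ?thesis
      using top that by auto
  qed
  have split: "(\<Sum>l\<in>UNIV. g l) = (\<Sum>l\<in>L. g l) + (\<Sum>l\<in>-L. g l)" for g :: "'m \<Rightarrow> real"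
    by (metis Compl_partition sum.union_disjoint Compl_disjoint finite_class.finite_code)
  have "(\<Sum>l\<in>UNIV. d l * w l) - sum d L = (\<Sum>l\<in>L. d l * (w l - 1)) + (\<Sum>l\<in>-L. d l * w l)"
    by (simp add: split[of "\<lambda>l. d l * w l"] sum_subtractf right_diff_distrib)
  also have "\<dots> \<le> (\<Sum>l\<in>L. th * (w l - 1)) + (\<Sum>l\<in>-L. th * w l)"
    using thL thN w by (intro add_mono sum_mono mult_right_mono_neg mult_right_mono) auto
  also have "\<dots> = th * ((\<Sum>l\<in>UNIV. w l) - card L)"
    by (simp add: split[of w] sum_distrib_left[symmetric] sum_subtractf algebra_simps)
  finally show ?thesis
    using total by simp
qed

lemma ky_fan_inequality:
  fixes U V :: "complex^'m^'m"
  assumes U: "unitary_mat U" and V: "unitary_mat V" and J: "card J = k" and k: "k \<le> CARD('m)"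
  shows "(\<Sum>j\<in>J. Re (cinner ((V ** diag_mat d ** adj V) *v column j U) (column j U))) \<le> largest_sum k d"
proof -
  define W where "W = adj V ** U"
  have W: "unitary_mat W"
    unfolding W_def by (rule unitary_mat_mult[OF unitary_mat_adj[OF V] U])
  define w where "w l = (\<Sum>j\<in>J. (cmod (W $ l $ j))\<^sup>2)" for l
  have "(adj V *v column j U) $ l = W $ l $ j" for j l
    unfolding W_def matrix_matrix_mult_def matrix_vector_mult_def column_def by simp
  then have "(\<Sum>j\<in>J. Re (cinner ((V ** diag_mat d ** adj V) *v column j U) (column j U)))
      = (\<Sum>j\<in>J. \<Sum>l\<in>UNIV. d l * (cmod (W $ l $ j))\<^sup>2)"
    by (simp add: cinner_conj_diag_mat)
  also have "\<dots> = (\<Sum>l\<in>UNIV. d l * w l)"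
    unfolding w_def by (simp add: sum_distrib_left sum.swap[of _ J])
  also obtain L where L: "card L = k" "largest_sum k d = sum d L"
      "\<And>l l'. l \<in> L \<Longrightarrow> l' \<notin> L \<Longrightarrow> d l' \<le> d l"
    using largest_sum_attained[OF k] by blast
  have "(\<Sum>l\<in>UNIV. d l * w l) \<le> sum d L"
  proof (rule weighted_sum_le_largest_values[OF _ _ _ L(3)])
    fix l
    show "0 \<le> w l"
      unfolding w_def by (simp add: sum_nonneg)
    have "w l \<le> (\<Sum>j\<in>UNIV. (cmod (W $ l $ j))\<^sup>2)"
      unfolding w_def by (rule sum_mono2) auto
    then show "w l \<le> 1"
      using unitary_row_norms[OF W] by simp
  next
    have "(\<Sum>l\<in>UNIV. w l) = (\<Sum>j\<in>J. \<Sum>l\<in>UNIV. (cmod (W $ l $ j))\<^sup>2)"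
      unfolding w_def by (rule sum.swap)
    then show "(\<Sum>l\<in>UNIV. w l) = real (card L)"
      using unitary_column_norms[OF W] J L(1) by simp
  qed
  finally show ?thesis
    using L(2) by simp
qed

lemma eigvals_desc_diagonalization:
  fixes R :: "complex^'m^'m"
  assumes "self_adjoint R"
  obtains V d where "unitary_mat V" "R = V ** diag_mat d ** adj V"
    "\<And>k. sum_list (take k (eigvals_desc R)) = largest_sum k d"
proof -
  obtain U0 D0 where "unitary_mat U0" "\<forall>i::unit. R = U0 ** diag_mat (D0 i) ** adj U0"
    using simultaneous_diagonalization[of "\<lambda>_::unit. R"] assms unfolding self_adjoint_def by blast
  then have "\<exists>M U d. unitary_mat U \<and> R = U ** diag_mat d ** adj U
                  \<and> M = image_mset d (mset_set (UNIV :: 'm set))"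
    by blast
  from someI_ex[OF this] obtain V d where V: "unitary_mat V" "R = V ** diag_mat d ** adj V"
    and M: "(SOME M. \<exists>U d. unitary_mat U \<and> R = U ** diag_mat d ** adj U
                  \<and> M = image_mset d (mset_set (UNIV :: 'm set))) = image_mset d (mset_set UNIV)"
    by blast
  show ?thesis
    by (rule that[OF V]) (unfold eigvals_desc_def largest_sum_def M, rule refl)
qed

lemma diagonal_sum_le_largest_eigvals:
  fixes R U :: "complex^'m^'m"
  assumes R: "self_adjoint R" and U: "unitary_mat U" and J: "card J = k" and k: "k \<le> CARD('m)"
  shows "(\<Sum>j\<in>J. Re (cinner (R *v column j U) (column j U))) \<le> sum_list (take k (eigvals_desc R))"
proof -
  obtain V d where V: "unitary_mat V" "R = V ** diag_mat d ** adj V"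
    and eig: "sum_list (take k (eigvals_desc R)) = largest_sum k d"
    using eigvals_desc_diagonalization[OF R] by metis
  show ?thesis
    using ky_fan_inequality[OF U V(1) J k, of d] by (simp only: eig[symmetric] V(2)[symmetric])
qed

lemma largest_eigvals_le_diagonal_sum:
  fixes U :: "complex^'m^'m"
  assumes U: "unitary_mat U" and k: "k \<le> CARD('m)"
  obtains J where "card J = k"
    "sum_list (take k (eigvals_desc (U ** diag_mat g ** adj U))) \<le> sum g J"
proof -
  let ?R = "U ** diag_mat g ** adj U"
  obtain V d where V: "unitary_mat V" "?R = V ** diag_mat d ** adj V"
    and eig: "sum_list (take k (eigvals_desc ?R)) = largest_sum k d"
    using eigvals_desc_diagonalization[OF self_adjoint_conj_diag_mat] by metis
  obtain L where L: "card L = k" "largest_sum k d = sum d L"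
    using largest_sum_attained[OF k] by metis
  obtain J where J: "card J = k" "largest_sum k g = sum g J"
    using largest_sum_attained[OF k] by metis
  have "sum_list (take k (eigvals_desc ?R))
      = (\<Sum>l\<in>L. Re (cinner ((V ** diag_mat d ** adj V) *v column l V) (column l V)))"
    unfolding eig L(2) by (simp add: cinner_unitary_conj_diag_column[OF V(1)])
  also have "\<dots> \<le> sum g J"
    unfolding J(2)[symmetric] V(2)[symmetric] by (rule ky_fan_inequality[OF V(1) U L(1) k])
  finally show ?thesis
    using that J(1) by blast
qed

lemma weak_major_if_diagonal_le:
  fixes R U :: "complex^'m^'m"
  assumes R: "self_adjoint R" and U: "unitary_mat U"
    and diag: "\<And>j. g j \<le> Re (cinner (R *v column j U) (column j U))"
  shows "weak_major (U ** diag_mat g ** adj U) R"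
  unfolding weak_major_def
proof
  fix k assume "k \<in> {1..CARD('m)}"
  then have k: "k \<le> CARD('m)"
    by simp
  obtain J where J: "card J = k"
    and largest: "sum_list (take k (eigvals_desc (U ** diag_mat g ** adj U))) \<le> sum g J"
    using largest_eigvals_le_diagonal_sum[OF U k] by blast
  note largest
  also have "sum g J \<le> (\<Sum>j\<in>J. Re (cinner (R *v column j U) (column j U)))"
    by (intro sum_mono diag)
  also have "\<dots> \<le> sum_list (take k (eigvals_desc R))"
    by (rule diagonal_sum_le_largest_eigvals[OF R U J k])
  finally show "sum_list (take k (eigvals_desc (U ** diag_mat g ** adj U)))
      \<le> sum_list (take k (eigvals_desc R))" .
qed

section \<open>Jensen's inequality for pointwise finite mixtures\<close>

lemma outside_interval_side:
  fixes I :: "real set"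
  assumes "is_interval I" "x \<notin> I"
  obtains s where "\<And>z. z \<in> I \<Longrightarrow> 0 < s * (z - x)"
proof -
  have "(\<forall>z\<in>I. x < z) \<or> (\<forall>z\<in>I. z < x)"
    using assms unfolding is_interval_1 by (meson linorder_not_le order.strict_iff_order)
  then show ?thesis
    using that[of 1] that[of "-1"] by force
qed

text \<open>If the mean were outside \<open>I\<close>, the nonnegative function \<open>s (g - \<integral>g \<cdot> c)\<close> would have
  integral zero, forcing \<open>c = 0\<close> almost everywhere.\<close>

lemma integral_mixture_in_interval:
  fixes c g :: "'t \<Rightarrow> real"
  assumes I: "is_interval I"
    and c: "integrable M c" "integral\<^sup>L M c = 1" and g: "integrable M g"
    and mix: "\<And>t. \<exists>p (z :: 'l::finite \<Rightarrow> real). (\<forall>l. 0 \<le> p l \<and> z l \<in> I)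
                \<and> c t = (\<Sum>l\<in>UNIV. p l) \<and> g t = (\<Sum>l\<in>UNIV. p l * z l)"
  shows "integral\<^sup>L M g \<in> I"
proof (rule ccontr)
  define x where "x = integral\<^sup>L M g"
  assume "x \<notin> I"
  then obtain s where s: "\<And>z. z \<in> I \<Longrightarrow> 0 < s * (z - x)"
    using outside_interval_side[OF I] by blast
  define h where "h t = s * (g t - x * c t)" for t
  have h_nonneg: "0 \<le> h t" and h_zero: "h t = 0 \<Longrightarrow> c t = 0" for t
  proof -
    obtain p and z :: "'l \<Rightarrow> real" where pz: "\<forall>l. 0 \<le> p l \<and> z l \<in> I"
      and ct: "c t = (\<Sum>l\<in>UNIV. p l)" and gt: "g t = (\<Sum>l\<in>UNIV. p l * z l)"
      using mix[of t] by blast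
    have ht: "h t = (\<Sum>l\<in>UNIV. p l * (s * (z l - x)))"
      unfolding h_def ct gt by (simp add: sum_distrib_left sum_subtractf algebra_simps)
    have terms: "0 \<le> p l * (s * (z l - x))" for l
      using pz s[of "z l"] by simp
    show "0 \<le> h t"
      unfolding ht by (intro sum_nonneg terms)
    assume "h t = 0"
    then have "\<forall>l\<in>UNIV. p l * (s * (z l - x)) = 0"
      unfolding ht using terms by (subst sum_nonneg_eq_0_iff[symmetric]) auto
    then have "p l = 0" for l
      using pz s[of "z l"] by force
    then show "c t = 0"
      unfolding ct by simp
  qed
  have "integrable M h"
    unfolding h_def using c g by simp
  moreover have "integral\<^sup>L M h = 0"
    unfolding h_def using c g by (simp add: x_def)
  ultimately have "AE t in M. h t = 0"
    using integral_nonneg_eq_0_iff_AE h_nonneg by blast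
  then have "integral\<^sup>L M c = 0"
    by (intro integral_eq_zero_AE) (auto elim: AE_mp intro: h_zero)
  then show False
    using c by simp
qed

lemma integral_mixture_in_box:
  fixes c :: "'t \<Rightarrow> real" and g :: "'t \<Rightarrow> real^'n"
  assumes I: "\<And>i. is_interval (I i)"
    and c: "integrable M c" "integral\<^sup>L M c = 1" and g: "integrable M g"
    and mix: "\<And>t. \<exists>p (\<mu> :: 'l::finite \<Rightarrow> real^'n). (\<forall>l. 0 \<le> p l \<and> (\<forall>i. \<mu> l $ i \<in> I i))
                \<and> c t = (\<Sum>l\<in>UNIV. p l) \<and> g t = (\<Sum>l\<in>UNIV. p l *\<^sub>R \<mu> l)"
  shows "\<forall>i. integral\<^sup>L M g $ i \<in> I i"
proof
  fix i
  have "integral\<^sup>L M (\<lambda>t. g t $ i) \<in> I i"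
  proof (rule integral_mixture_in_interval[OF I c])
    show "integrable M (\<lambda>t. g t $ i)"
      using integrable_bounded_linear[OF bounded_linear_vec_nth g] .
    show "\<exists>p (z :: 'l \<Rightarrow> real). (\<forall>l. 0 \<le> p l \<and> z l \<in> I i)
        \<and> c t = (\<Sum>l\<in>UNIV. p l) \<and> g t $ i = (\<Sum>l\<in>UNIV. p l * z l)" for t
    proof -
      obtain p and \<mu> :: "'l \<Rightarrow> real^'n" where "\<forall>l. 0 \<le> p l \<and> (\<forall>i. \<mu> l $ i \<in> I i)"
        "c t = (\<Sum>l\<in>UNIV. p l)" "g t = (\<Sum>l\<in>UNIV. p l *\<^sub>R \<mu> l)"
        using mix[of t] by blast
      then show ?thesis
        by (intro exI[of _ p] exI[of _ "\<lambda>l. \<mu> l $ i"]) simp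
    qed
  qed
  then show "integral\<^sup>L M g $ i \<in> I i"
    using integral_bounded_linear[OF bounded_linear_vec_nth g] by simp
qed

text \<open>A hyperplane separating the mean from the closed convex epigraph would also separate
  the integral of the pointwise mixtures of epigraph points.\<close>

lemma integral_mixture_in_closure_epigraph:
  fixes f :: "'a::euclidean_space \<Rightarrow> real" and g :: "'t \<Rightarrow> 'a"
  assumes f: "convex_on K f"
    and c: "integrable M c" "integral\<^sup>L M c = 1" and g: "integrable M g" and h: "integrable M h"
    and mix: "\<And>t. \<exists>p (\<mu> :: 'l::finite \<Rightarrow> 'a). (\<forall>l. 0 \<le> p l \<and> \<mu> l \<in> K) \<and> c t = (\<Sum>l\<in>UNIV. p l)
                \<and> g t = (\<Sum>l\<in>UNIV. p l *\<^sub>R \<mu> l) \<and> h t = (\<Sum>l\<in>UNIV. p l * f (\<mu> l))"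
  shows "(integral\<^sup>L M g, integral\<^sup>L M h) \<in> closure (epigraph K f)"
proof (rule ccontr)
  assume "(integral\<^sup>L M g, integral\<^sup>L M h) \<notin> closure (epigraph K f)"
  moreover have "convex (closure (epigraph K f))"
    using f by (simp add: convex_epigraph convex_closure)
  ultimately obtain a b where below: "inner a (integral\<^sup>L M g, integral\<^sup>L M h) < b"
    and above: "\<And>x. x \<in> closure (epigraph K f) \<Longrightarrow> b < inner a x"
    using separating_hyperplane_closed_point[OF _ closed_closure] by metis
  define \<phi> where "\<phi> = (\<lambda>t. inner (fst a) (g t) + snd a * h t)"
  have inner_pair: "inner a (x, y) = inner (fst a) x + snd a * y" for x y
    by (cases a) (simp add: inner_Pair)
  have "b * c t \<le> \<phi> t" for t
  proof -
    obtain p and \<mu> :: "'l \<Rightarrow> 'a" where p\<mu>: "\<forall>l. 0 \<le> p l \<and> \<mu> l \<in> K"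
      and ct: "c t = (\<Sum>l\<in>UNIV. p l)" and gt: "g t = (\<Sum>l\<in>UNIV. p l *\<^sub>R \<mu> l)"
      and ht: "h t = (\<Sum>l\<in>UNIV. p l * f (\<mu> l))"
      using mix[of t] by blast
    have "b * c t = (\<Sum>l\<in>UNIV. p l * b)"
      unfolding ct by (simp add: sum_distrib_left mult.commute)
    also have "\<dots> \<le> (\<Sum>l\<in>UNIV. p l * inner a (\<mu> l, f (\<mu> l)))"
    proof (rule sum_mono)
      fix l
      have "(\<mu> l, f (\<mu> l)) \<in> closure (epigraph K f)"
        using p\<mu> closure_subset by (fastforce simp: epigraph_def)
      then show "p l * b \<le> p l * inner a (\<mu> l, f (\<mu> l))"
        using p\<mu> above by (intro mult_left_mono) (auto intro: less_imp_le)
    qed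
    also have "\<dots> = \<phi> t"
      unfolding \<phi>_def gt ht inner_pair
      by (simp add: inner_sum_right sum_distrib_left sum.distrib distrib_left mult_ac)
    finally show ?thesis .
  qed
  then have "integral\<^sup>L M (\<lambda>t. b * c t) \<le> integral\<^sup>L M \<phi>"
    using c g h unfolding \<phi>_def by (intro integral_mono) auto
  then have "b \<le> inner a (integral\<^sup>L M g, integral\<^sup>L M h)"
    using c g h unfolding \<phi>_def by (simp add: inner_pair)
  then show False
    using below by simp
qed

lemma jensen_mixture:
  fixes f :: "'a::euclidean_space \<Rightarrow> real" and g :: "'t \<Rightarrow> 'a"
  assumes f: "continuous_on K f" "convex_on K f"
    and c: "integrable M c" "integral\<^sup>L M c = 1" and g: "integrable M g" and h: "integrable M h"
    and mean: "integral\<^sup>L M g \<in> K"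
    and mix: "\<And>t. \<exists>p (\<mu> :: 'l::finite \<Rightarrow> 'a). (\<forall>l. 0 \<le> p l \<and> \<mu> l \<in> K) \<and> c t = (\<Sum>l\<in>UNIV. p l)
                \<and> g t = (\<Sum>l\<in>UNIV. p l *\<^sub>R \<mu> l) \<and> h t = (\<Sum>l\<in>UNIV. p l * f (\<mu> l))"
  shows "f (integral\<^sup>L M g) \<le> integral\<^sup>L M h"
proof -
  obtain s where s: "\<And>n. s n \<in> epigraph K f" "s \<longlonglongrightarrow> (integral\<^sup>L M g, integral\<^sup>L M h)"
    using integral_mixture_in_closure_epigraph[OF f(2) c g h mix] unfolding closure_sequential by blast
  have sK: "fst (s n) \<in> K" and s_above: "f (fst (s n)) \<le> snd (s n)" for n
    using s(1)[of n] by (auto simp: epigraph_def)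
  have "(\<lambda>n. fst (s n)) \<longlonglongrightarrow> integral\<^sup>L M g"
    using tendsto_fst[OF s(2)] by simp
  then have "(\<lambda>n. f (fst (s n))) \<longlonglongrightarrow> f (integral\<^sup>L M g)"
    by (rule continuous_on_tendsto_compose[OF f(1) _ mean]) (simp add: sK)
  moreover have "(\<lambda>n. snd (s n)) \<longlonglongrightarrow> integral\<^sup>L M h"
    using tendsto_snd[OF s(2)] by simp
  ultimately show ?thesis
    using s_above by (intro LIMSEQ_le) auto
qed

lemma bounded_bilinear_matrix_mult:
  "bounded_bilinear ((**) :: complex^'m^'m \<Rightarrow> complex^'m^'m \<Rightarrow> complex^'m^'m)"
proof -
  have "(A + B) ** C = A ** C + B ** C" for A B C :: "complex^'m^'m"
    by (simp add: matrix_matrix_mult_def vec_eq_iff distrib_right sum.distrib)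
  then show ?thesis
    unfolding bilinear_conv_bounded_bilinear[symmetric] bilinear_def
    by (auto intro!: linearI simp: matrix_add_ldistrib matrix_scalar_ac scalar_matrix_assoc)
qed

lemma norm_matrix_square:
  "(norm (A :: complex^'m^'m))\<^sup>2 = (\<Sum>r\<in>UNIV. \<Sum>s\<in>UNIV. (cmod (A $ r $ s))\<^sup>2)"
  by (simp add: norm_vec_def L2_set_def sum_nonneg)

lemma norm_adj [simp]: "norm (adj A) = norm (A :: complex^'m^'m)"
proof -
  have "(norm (adj A))\<^sup>2 = (norm A)\<^sup>2"
    unfolding norm_matrix_square by (simp add: complex_mod_cnj) (rule sum.swap)
  then show ?thesis
    by simp
qed

lemma norm_square_eq_trace: "(norm A)\<^sup>2 = (\<Sum>s\<in>UNIV. Re ((adj A ** A) $ s $ s))"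
proof -
  have "(norm A)\<^sup>2 = (\<Sum>s\<in>UNIV. \<Sum>r\<in>UNIV. (cmod (A $ r $ s))\<^sup>2)"
    unfolding norm_matrix_square by (rule sum.swap)
  also have "\<dots> = (\<Sum>s\<in>UNIV. Re ((adj A ** A) $ s $ s))"
    by (simp add: matrix_matrix_mult_def mult.commute mult_cnj_self Re_sum del: of_real_power)
  finally show ?thesis .
qed

text \<open>The weight \<open>a\<^sup>* a\<close> is integrable, hence so is \<open>\<parallel>a\<parallel>\<^sup>2\<close> (its trace), and this dominates the
  congruence \<open>a\<^sup>* X a\<close> of a bounded field \<open>X\<close>.\<close>

lemma integrable_congruence:
  fixes a X :: "'t::topological_space \<Rightarrow> complex^'m^'m"
  assumes sets: "sets M = sets borel" and a: "continuous_on UNIV a"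
    and aa: "integrable M (\<lambda>t. adj (a t) ** a t)"
    and X: "continuous_on UNIV X" "bounded (range X)"
  shows "integrable M (\<lambda>t. adj (a t) ** X t ** a t)"
proof -
  obtain B where B: "\<And>t. norm (X t) \<le> B"
    using X(2) unfolding bounded_iff by auto
  obtain K where K: "K > 0"
    "\<And>(A :: complex^'m^'m) (B :: complex^'m^'m). norm (A ** B) \<le> norm A * norm B * K"
    using bounded_bilinear.pos_bounded[OF bounded_bilinear_matrix_mult] by metis
  have diag: "integrable M (\<lambda>t. Re ((adj (a t) ** a t) $ s $ s))" for s
    by (rule integrable_bounded_linear[OF _ aa])
      (intro bounded_linear_compose[OF bounded_linear_Re]
        bounded_linear_compose[OF bounded_linear_vec_nth bounded_linear_vec_nth])
  have "integrable M (\<lambda>t. \<Sum>s\<in>UNIV. Re ((adj (a t) ** a t) $ s $ s))"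
    by (intro Bochner_Integration.integrable_sum diag)
  then have bound_integrable: "integrable M (\<lambda>t. (K * K * B) * (norm (a t))\<^sup>2)"
    by (simp add: norm_square_eq_trace)
  have measurable: "(\<lambda>t. adj (a t) ** X t ** a t) \<in> borel_measurable M"
  proof -
    have "continuous_on UNIV (\<lambda>t. adj (a t) ** X t ** a t)"
      by (intro bounded_bilinear.continuous_on[OF bounded_bilinear_matrix_mult]
          linear_continuous_on[OF bounded_linear_adj, THEN continuous_on_compose2] a X(1)) auto
    then show ?thesis
      unfolding measurable_cong_sets[OF sets refl] by (rule borel_measurable_continuous_onI)
  qed
  have bound: "norm (adj (a t) ** X t ** a t) \<le> norm ((K * K * B) * (norm (a t))\<^sup>2)" for t
  proof -
    have "norm (adj (a t) ** X t ** a t) \<le> norm (a t) * norm (X t) * K * norm (a t) * K"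
      using K(2)[of "adj (a t) ** X t" "a t"] K(2)[of "adj (a t)" "X t"] K(1)
      by (simp add: mult_right_mono order_trans)
    also have "\<dots> \<le> norm (a t) * B * K * norm (a t) * K"
      using B[of t] K(1) by (intro mult_right_mono mult_left_mono) auto
    also have "\<dots> \<le> norm ((K * K * B) * (norm (a t))\<^sup>2)"
      by (simp add: power2_eq_square mult_ac)
    finally show ?thesis .
  qed
  show ?thesis
    by (rule Bochner_Integration.integrable_bound[OF bound_integrable measurable AE_I2[OF bound]])
qed

lemma bounded_linear_quadratic_form: "bounded_linear (\<lambda>A::complex^'m^'m. Re (cinner (A *v u) u))"
proof -
  have "(c *\<^sub>R A) *v u = c *\<^sub>R (A *v u)" for c and A :: "complex^'m^'m"
    by (simp add: vec_eq_iff matrix_vector_mult_def scaleR_sum_right)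
  then show ?thesis
    unfolding linear_conv_bounded_linear[symmetric]
    by (intro linearI) (simp_all add: matrix_vector_mult_add_rdistrib cinner_add_left cinner_scaleR_left)
qed

lemma integrable_vec_lambda:
  fixes g :: "'n::finite \<Rightarrow> 't \<Rightarrow> real"
  assumes "\<And>i. integrable M (g i)"
  shows "integrable M (\<lambda>t. \<chi> i. g i t)" "integral\<^sup>L M (\<lambda>t. \<chi> i. g i t) = (\<chi> i. integral\<^sup>L M (g i))"
proof -
  have eq: "(\<lambda>t. \<chi> i. g i t) = (\<lambda>t. \<Sum>i\<in>UNIV. g i t *\<^sub>R axis i 1)"
    by (simp add: fun_eq_iff vec_eq_iff axis_def if_distrib cong: if_cong)
  show "integrable M (\<lambda>t. \<chi> i. g i t)"
    unfolding eq using assms by simp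
  show "integral\<^sup>L M (\<lambda>t. \<chi> i. g i t) = (\<chi> i. integral\<^sup>L M (g i))"
    unfolding eq using assms by (simp add: vec_eq_iff axis_def if_distrib cong: if_cong)
qed

text \<open>In an orthonormal basis of joint eigenvectors the vector state of \<open>w\<close> becomes a finite mixture
  of point masses at joint eigenvalues, with weights the squared coordinates of \<open>w\<close>.\<close>

lemma quadratic_forms_joint_fc_mixture:
  fixes X :: "'n::finite \<Rightarrow> complex^'m^'m"
  assumes "abelian_sa_tuple X"
  shows "\<exists>p (\<mu> :: 'm \<Rightarrow> real^'n). (\<forall>l. 0 \<le> p l \<and> (\<forall>i. complex_of_real (\<mu> l $ i) \<in> spec (X i)))
    \<and> Re (cinner w w) = (\<Sum>l\<in>UNIV. p l)
    \<and> (\<chi> i. Re (cinner (X i *v w) w)) = (\<Sum>l\<in>UNIV. p l *\<^sub>R \<mu> l)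
    \<and> Re (cinner (joint_fc f X *v w) w) = (\<Sum>l\<in>UNIV. p l * f (\<mu> l))"
proof -
  obtain W D where W: "unitary_mat W" and XW: "\<forall>i. X i = W ** diag_mat (D i) ** adj W"
    and fW: "joint_fc f X = W ** diag_mat (\<lambda>l. f (\<chi> i. D i l)) ** adj W"
    using joint_fc_diagonalization[OF assms] by blast
  define p where "p l = (cmod ((adj W *v w) $ l))\<^sup>2" for l
  define \<mu> :: "'m \<Rightarrow> real^'n" where "\<mu> l = (\<chi> i. D i l)" for l
  have "Re (cinner w w) = Re (cinner (adj W *v w) (adj W *v w))"
    by (simp only: cinner_adj_unitary[OF W])
  also have "\<dots> = (\<Sum>l\<in>UNIV. p l)"
    unfolding p_def by (rule Re_cinner_self)
  finally have "Re (cinner w w) = (\<Sum>l\<in>UNIV. p l)" .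
  moreover have "(\<chi> i. Re (cinner (X i *v w) w)) = (\<Sum>l\<in>UNIV. p l *\<^sub>R \<mu> l)"
    by (simp add: XW vec_eq_iff cinner_conj_diag_mat p_def \<mu>_def mult.commute)
  moreover have "Re (cinner (joint_fc f X *v w) w) = (\<Sum>l\<in>UNIV. p l * f (\<mu> l))"
    by (simp add: fW cinner_conj_diag_mat p_def \<mu>_def mult.commute)
  moreover have "complex_of_real (\<mu> l $ i) \<in> spec (X i)" for l i
    using XW of_real_in_spec_conj_diag[OF W] by (simp add: \<mu>_def)
  ultimately show ?thesis
    by (intro exI[of _ p] exI[of _ \<mu>]) (auto simp: p_def)
qed

lemma self_adjoint_joint_fc: "abelian_sa_tuple x \<Longrightarrow> self_adjoint (joint_fc f x)"
  using joint_fc_diagonalization[of x f] self_adjoint_conj_diag_mat by metis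

lemma self_adjoint_integral_congruence:
  assumes "\<And>t. self_adjoint (X t)" and "integrable M (\<lambda>t. adj (a t) ** X t ** a t)"
  shows "self_adjoint (integral\<^sup>L M (\<lambda>t. adj (a t) ** X t ** a t))"
proof -
  have "adj (integral\<^sup>L M (\<lambda>t. adj (a t) ** X t ** a t))
      = integral\<^sup>L M (\<lambda>t. adj (adj (a t) ** X t ** a t))"
    by (rule integral_bounded_linear[OF bounded_linear_adj assms(2), symmetric])
  also have "\<dots> = integral\<^sup>L M (\<lambda>t. adj (a t) ** X t ** a t)"
    using assms(1) by (simp add: adj_matrix_mult matrix_mul_assoc self_adjoint_def)
  finally show ?thesis
    unfolding self_adjoint_def .
qed

section \<open>The operator Jensen inequality and weak majorization\<close>

theorem operator_jensen_vector_state: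
  fixes f :: "real^'n \<Rightarrow> real" and I :: "'n \<Rightarrow> real set"
    and a :: "'t \<Rightarrow> complex^'m^'m" and x :: "'n \<Rightarrow> 't \<Rightarrow> complex^'m^'m"
  assumes intervals: "\<And>i. is_interval (I i)"
    and f_cont: "continuous_on {z. \<forall>i. z $ i \<in> I i} f"
    and f_convex: "convex_on {z. \<forall>i. z $ i \<in> I i} f"
    and aa: "integrable M (\<lambda>t. adj (a t) ** a t)" and aa1: "integral\<^sup>L M (\<lambda>t. adj (a t) ** a t) = mat 1"
    and ax: "\<And>i. integrable M (\<lambda>t. adj (a t) ** x i t ** a t)"
    and x_abelian: "\<And>t. abelian_sa_tuple (\<lambda>i. x i t)"
    and x_spec: "\<And>i t. spec (x i t) \<subseteq> complex_of_real ` I i"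
    and afx: "integrable M (\<lambda>t. adj (a t) ** joint_fc f (\<lambda>i. x i t) ** a t)"
    and u: "cinner u u = 1"
  shows "f (\<chi> i. Re (cinner (integral\<^sup>L M (\<lambda>t. adj (a t) ** x i t ** a t) *v u) u))
           \<le> Re (cinner (integral\<^sup>L M (\<lambda>t. adj (a t) ** joint_fc f (\<lambda>i. x i t) ** a t) *v u) u)"
proof -
  define K where "K = {z. \<forall>i. z $ i \<in> I i}"
  define Q where "Q = (\<lambda>A::complex^'m^'m. Re (cinner (A *v u) u))"
  have Q: "bounded_linear Q"
    unfolding Q_def by (rule bounded_linear_quadratic_form)
  define c where "c = (\<lambda>t. Q (adj (a t) ** a t))"
  define g where "g = (\<lambda>t. \<chi> i. Q (adj (a t) ** x i t ** a t))"
  define h where "h = (\<lambda>t. Q (adj (a t) ** joint_fc f (\<lambda>i. x i t) ** a t))"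
  have c: "integrable M c" "integral\<^sup>L M c = 1"
    using integral_bounded_linear[OF Q aa] integrable_bounded_linear[OF Q aa] u
    by (simp_all add: c_def aa1 Q_def)
  have g: "integrable M g" "integral\<^sup>L M g = (\<chi> i. Q (integral\<^sup>L M (\<lambda>t. adj (a t) ** x i t ** a t)))"
    using integrable_vec_lambda[OF integrable_bounded_linear[OF Q ax]]
    by (simp_all add: g_def integral_bounded_linear[OF Q ax])
  have h: "integrable M h" "integral\<^sup>L M h = Q (integral\<^sup>L M (\<lambda>t. adj (a t) ** joint_fc f (\<lambda>i. x i t) ** a t))"
    using integrable_bounded_linear[OF Q afx] integral_bounded_linear[OF Q afx] by (simp_all add: h_def)
  have mix: "\<exists>p (\<mu> :: 'm \<Rightarrow> real^'n). (\<forall>l. 0 \<le> p l \<and> \<mu> l \<in> K) \<and> c t = (\<Sum>l\<in>UNIV. p l)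
      \<and> g t = (\<Sum>l\<in>UNIV. p l *\<^sub>R \<mu> l) \<and> h t = (\<Sum>l\<in>UNIV. p l * f (\<mu> l))" for t
  proof -
    obtain p and \<mu> :: "'m \<Rightarrow> real^'n" where
      p\<mu>: "\<forall>l. 0 \<le> p l \<and> (\<forall>i. complex_of_real (\<mu> l $ i) \<in> spec (x i t))"
      and "Re (cinner (a t *v u) (a t *v u)) = (\<Sum>l\<in>UNIV. p l)"
      "(\<chi> i. Re (cinner (x i t *v (a t *v u)) (a t *v u))) = (\<Sum>l\<in>UNIV. p l *\<^sub>R \<mu> l)"
      "Re (cinner (joint_fc f (\<lambda>i. x i t) *v (a t *v u)) (a t *v u)) = (\<Sum>l\<in>UNIV. p l * f (\<mu> l))"
      using quadratic_forms_joint_fc_mixture[OF x_abelian[of t], where w = "a t *v u" and f = f]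
      by (elim exE conjE) (rule that; assumption)
    moreover have "\<mu> l \<in> K" for l
      using p\<mu> x_spec by (fastforce simp: K_def)
    ultimately show ?thesis
      using cinner_congruence[of "a t" "mat 1" u]
      by (intro exI[of _ p] exI[of _ \<mu>]) (simp add: c_def g_def h_def Q_def cinner_congruence)
  qed
  have "\<forall>i. integral\<^sup>L M g $ i \<in> I i"
  proof (rule integral_mixture_in_box[OF intervals c g(1)])
    show "\<exists>p (\<mu> :: 'm \<Rightarrow> real^'n). (\<forall>l. 0 \<le> p l \<and> (\<forall>i. \<mu> l $ i \<in> I i))
        \<and> c t = (\<Sum>l\<in>UNIV. p l) \<and> g t = (\<Sum>l\<in>UNIV. p l *\<^sub>R \<mu> l)" for t
      using mix[of t] unfolding K_def mem_Collect_eq by (elim exE conjE) (intro exI conjI; assumption)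
  qed
  then have "integral\<^sup>L M g \<in> K"
    unfolding K_def by simp
  from jensen_mixture[OF f_cont[folded K_def] f_convex[folded K_def] c g(1) h(1) this mix]
  show ?thesis
    unfolding g(2) h(2) Q_def .
qed

theorem mainTheorem6:
  fixes f :: "real^'n \<Rightarrow> real"
    and I :: "'n \<Rightarrow> real set"
    and \<nu> :: "'t::t2_space measure"
    and a :: "'t \<Rightarrow> complex^'m^'m"
    and x :: "'n \<Rightarrow> 't \<Rightarrow> complex^'m^'m"
  assumes intervals: "\<And>i. is_interval (I i)"
    and f_cont: "continuous_on {z. \<forall>i. z $ i \<in> I i} f"
    and f_convex: "convex_on {z. \<forall>i. z $ i \<in> I i} f"
    and T_lc: "locally_compact_space (euclidean :: 't topology)"
    and radon: "radon_measure \<nu>"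
    and a_field: "unital_column_field \<nu> a"
    and x_cont: "\<And>i. continuous_on UNIV (x i)"
    and x_bdd: "\<And>i. bounded (range (x i))"
    and x_abelian: "\<And>t. abelian_sa_tuple (\<lambda>i. x i t)"
    and x_spec: "\<And>i t. spec (x i t) \<subseteq> complex_of_real ` I i"
    and y_abelian: "abelian_sa_tuple (\<lambda>i. integral\<^sup>L \<nu> (\<lambda>t. adj (a t) ** x i t ** a t))"
    and rhs_integrable: "integrable \<nu> (\<lambda>t. adj (a t) ** joint_fc f (\<lambda>i. x i t) ** a t)"
  shows "weak_major
           (joint_fc f (\<lambda>i. integral\<^sup>L \<nu> (\<lambda>t. adj (a t) ** x i t ** a t)))
           (integral\<^sup>L \<nu> (\<lambda>t. adj (a t) ** joint_fc f (\<lambda>i. x i t) ** a t))"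
proof -
  have aa: "integrable \<nu> (\<lambda>t. adj (a t) ** a t)" "integral\<^sup>L \<nu> (\<lambda>t. adj (a t) ** a t) = mat 1"
    using a_field unfolding unital_column_field_def by auto
  have ax: "integrable \<nu> (\<lambda>t. adj (a t) ** x i t ** a t)" for i
    using radon a_field x_cont x_bdd
    by (intro integrable_congruence) (auto simp: radon_measure_def unital_column_field_def)
  obtain U D where U: "unitary_mat U"
    and y: "\<forall>i. integral\<^sup>L \<nu> (\<lambda>t. adj (a t) ** x i t ** a t) = U ** diag_mat (D i) ** adj U"
    and fy: "joint_fc f (\<lambda>i. integral\<^sup>L \<nu> (\<lambda>t. adj (a t) ** x i t ** a t))
               = U ** diag_mat (\<lambda>j. f (\<chi> i. D i j)) ** adj U"
    using joint_fc_diagonalization[OF y_abelian] by blast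
  have unit_column: "cinner (column j U) (column j U) = 1" for j
    using cinner_unitary_columns[OF U] by simp
  have "f (\<chi> i. D i j) \<le> Re (cinner
      (integral\<^sup>L \<nu> (\<lambda>t. adj (a t) ** joint_fc f (\<lambda>i. x i t) ** a t) *v column j U) (column j U))" for j
    using operator_jensen_vector_state[OF intervals f_cont f_convex aa ax x_abelian x_spec rhs_integrable
        unit_column[of j]]
    by (simp add: y cinner_unitary_conj_diag_column[OF U])
  then show ?thesis
    unfolding fy
    by (intro weak_major_if_diagonal_le U self_adjoint_integral_congruence[OF _ rhs_integrable]
        self_adjoint_joint_fc x_abelian)
qed

end
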